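(* Let $\mathcal{A}$ be the Weyl arrangement of type $A_3$, realized in $\mathbb{K}^3$ as the six hyperplanes $x=0$, $y=0$, $z=0$, $x=y$, $y=z$, $x=z$. Let $m$ be a multiplicity on $\mathcal{A}$ such that $(\mathcal{A},m)$ is unbalanced. Then the freeness of $(\mathcal{A},m)$ depends only on $L(\mathcal{A})$ together with the values $m(H)$, $H\in\mathcal{A}$. Precisely: let $(\mathcal{A}',m')$ be a multiarrangement in $\mathbb{K}^3$ and $\varphi:\mathcal{A}\to\mathcal{A}'$ a bijection such that $m'(\varphi(H))=m(H)$ for all $H$ and $\operatorname{codim}\bigcap_{H\in\mathcal{B}}H=\operatorname{codim}\bigcap_{H\in\mathcal{B}}\varphi(H)$ for every subset $\mathcal{B}\subseteq\mathcal{A}$. Then $(\mathcal{A},m)$ is free if and only if $(\mathcal{A}',m')$ is free.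
   Context: Let $\mathbb{K}$ be a field. A multiarrangement $(\mathcal{A},m)$ in $V=\mathbb{K}^3$ is a finite set $\mathcal{A}$ of linear hyperplanes, each $H$ with a fixed defining linear form $\alpha_H$, together with a multiplicity $m:\mathcal{A}\to\mathbb{Z}_{>0}$; write $|m|=\sum_H m(H)$. $L(\mathcal{A})$ is the set of intersections of subsets of $\mathcal{A}$. $(\mathcal{A},m)$ is free if $D(\mathcal{A},m)=\{\theta\in\mathrm{Der}_{\mathbb{K}}(\mathbb{K}[x,y,z]):\theta(\alpha_H)\in\alpha_H^{m(H)}\mathbb{K}[x,y,z]\ \forall H\}$ is a free module. A hyperplane $H_0$ is heavy if $2m(H_0)\ge|m|$, and $(\mathcal{A},m)$ is unbalanced if it has a heavy hyperplane. *)

theory Defs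
  imports "HOL-Computational_Algebra.Polynomial" "HOL-Library.Product_Plus"
begin

text \<open>Vectors of K^3 and linear forms on K^3 are both represented as triples.
  A linear form (a,b,c) stands for a x + b y + c z.\<close>

type_synonym 'k vec3 = "'k \<times> 'k \<times> 'k"

definition scale3 :: "'k::field \<Rightarrow> 'k vec3 \<Rightarrow> 'k vec3" where
  "scale3 c v = (c * fst v, c * fst (snd v), c * snd (snd v))"

definition hyp :: "'k::field vec3 \<Rightarrow> 'k vec3 set" where
  "hyp \<alpha> = {v. fst \<alpha> * fst v + fst (snd \<alpha>) * fst (snd v) + snd (snd \<alpha>) * snd (snd v) = 0}"

definition codim3 :: "'k::field vec3 set \<Rightarrow> nat" where
  "codim3 W = 3 - vector_space.dim scale3 W"

text \<open>S = K[x,y,z], realised as ((K[x])[y])[z].\<close>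
type_synonym 'k S = "'k poly poly poly"

definition constS :: "'k::field \<Rightarrow> 'k S" where
  "constS a = [:[:[:a:]:]:]"

definition varX :: "'k::field S" where "varX = [:[:[:0, 1:]:]:]"
definition varY :: "'k::field S" where "varY = [:[:0, 1:]:]"
definition varZ :: "'k::field S" where "varZ = [:0, 1:]"

definition formS :: "'k::field vec3 \<Rightarrow> 'k S" where
  "formS \<alpha> = constS (fst \<alpha>) * varX + constS (fst (snd \<alpha>)) * varY + constS (snd (snd \<alpha>)) * varZ"

text \<open>A K-linear derivation of S is theta = f1 d/dx + f2 d/dy + f3 d/dz, identified with
  the triple (f1,f2,f3) in S^3 (Der_K(S) is the free S-module with basis d/dx, d/dy, d/dz).\<close>
type_synonym 'k der = "'k S \<times> 'k S \<times> 'k S"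

definition scaleS :: "'k::field S \<Rightarrow> 'k der \<Rightarrow> 'k der" where
  "scaleS s \<theta> = (s * fst \<theta>, s * fst (snd \<theta>), s * snd (snd \<theta>))"

definition der_app :: "'k::field der \<Rightarrow> 'k vec3 \<Rightarrow> 'k S" where
  "der_app \<theta> \<alpha> = constS (fst \<alpha>) * fst \<theta> + constS (fst (snd \<alpha>)) * fst (snd \<theta>)
                  + constS (snd (snd \<alpha>)) * snd (snd \<theta>)"

text \<open>A central arrangement in K^3 is given by a finite set of defining forms (nonzero),
  distinct forms defining distinct hyperplanes. A multiplicity is a function to positive naturals.\<close>
definition multiarr :: "'k::field vec3 set \<Rightarrow> ('k vec3 \<Rightarrow> nat) \<Rightarrow> bool" where
  "multiarr A m \<longleftrightarrow> finite A \<and> (\<forall>\<alpha>\<in>A. \<alpha> \<noteq> 0 \<and> m \<alpha> > 0)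
     \<and> (\<forall>\<alpha>\<in>A. \<forall>\<beta>\<in>A. hyp \<alpha> = hyp \<beta> \<longrightarrow> \<alpha> = \<beta>)"

definition total_mult :: "'k vec3 set \<Rightarrow> ('k vec3 \<Rightarrow> nat) \<Rightarrow> nat" where
  "total_mult A m = (\<Sum>\<alpha>\<in>A. m \<alpha>)"

definition unbalanced :: "'k vec3 set \<Rightarrow> ('k vec3 \<Rightarrow> nat) \<Rightarrow> bool" where
  "unbalanced A m \<longleftrightarrow> (\<exists>H0\<in>A. 2 * m H0 \<ge> total_mult A m)"

definition Dmod :: "'k::field vec3 set \<Rightarrow> ('k vec3 \<Rightarrow> nat) \<Rightarrow> 'k der set" where
  "Dmod A m = {\<theta>. \<forall>\<alpha>\<in>A. formS \<alpha> ^ m \<alpha> dvd der_app \<theta> \<alpha>}"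

definition free_multiarr :: "'k::field vec3 set \<Rightarrow> ('k vec3 \<Rightarrow> nat) \<Rightarrow> bool" where
  "free_multiarr A m \<longleftrightarrow> (\<exists>B. B \<subseteq> Dmod A m \<and> \<not> module.dependent scaleS B
       \<and> module.span scaleS B = Dmod A m)"

definition weylA3 :: "'k::field vec3 set" where
  "weylA3 = {(1,0,0), (0,1,0), (0,0,1), (1,-1,0), (0,1,-1), (1,0,-1)}"

end

(*
  A multiarrangement with the intersection lattice of A_3 is, after rescaling its defining forms,
  the image of A_3 under an invertible linear map. Indeed, the lattice forces the images a1, a2, a3
  of x, y, z to be a basis, the images a4, a5, a6 of x - y, y - z, x - z to lie in the planes
  spanned by a1, a2 resp. a2, a3 resp. a1, a3, and a4, a5, a6 to be dependent; solving these
  conditions gives a basis b1, b2, b3 in which the six forms are multiples of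
  b1, b2, b3, b1 - b2, b2 - b3, b1 - b3.

  The substitution x, y, z |-> b1, b2, b3 is a ring automorphism sigma of S, and composing with
  it gives a sigma-semilinear bijection of Der(S) carrying D(A_3, m) onto D(A', m'). Such a
  bijection maps bases to bases, so freeness is preserved.
*)

theory Submission
  imports Defs
begin

section \<open>Ring homomorphisms of \<open>S\<close>\<close>

definition is_ring_hom :: "('a::comm_ring_1 \<Rightarrow> 'b::comm_ring_1) \<Rightarrow> bool" where
  "is_ring_hom f \<longleftrightarrow> f 1 = 1 \<and> (\<forall>a b. f (a + b) = f a + f b) \<and> (\<forall>a b. f (a * b) = f a * f b)"

lemma is_ring_homD:
  assumes "is_ring_hom f"
  shows "f 1 = 1" "f (a + b) = f a + f b" "f (a * b) = f a * f b" "f 0 = 0" "f (- a) = - f a"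
    "f (a - b) = f a - f b" "f (a ^ n) = f a ^ n"
proof -
  show add: "f (a + b) = f a + f b" for a b using assms by (simp add: is_ring_hom_def)
  show one: "f 1 = 1" and mult: "f (a * b) = f a * f b" for a b
    using assms by (simp_all add: is_ring_hom_def)
  show zero: "f 0 = 0" using add[of 0 0] by simp
  show uminus: "f (- a) = - f a" for a
    using add[of a "- a"] zero by (metis eq_neg_iff_add_eq_0 right_minus)
  show "f (a - b) = f a - f b" using add[of a "- b"] uminus[of b] by simp
  show "f (a ^ n) = f a ^ n" by (induct n) (simp_all add: one mult)
qed

lemma is_ring_hom_dvd: "is_ring_hom f \<Longrightarrow> a dvd b \<Longrightarrow> f a dvd f b"
  by (auto simp: dvd_def is_ring_homD)

lemma is_ring_hom_id: "is_ring_hom (\<lambda>x. x)"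
  by (simp add: is_ring_hom_def)

lemma is_ring_hom_comp: "is_ring_hom f \<Longrightarrow> is_ring_hom g \<Longrightarrow> is_ring_hom (\<lambda>x. f (g x))"
  by (simp add: is_ring_hom_def)

lemma is_ring_hom_pCons_const: "is_ring_hom (\<lambda>a. [:a:])"
  by (simp add: is_ring_hom_def one_pCons)

lemma map_poly_add_hom: "is_ring_hom f \<Longrightarrow> map_poly f (p + q) = map_poly f p + map_poly f q"
  by (intro poly_eqI) (simp add: coeff_map_poly is_ring_homD)

lemma map_poly_mult_hom:
  assumes "is_ring_hom f"
  shows "map_poly f (p * q) = map_poly f p * map_poly f q"
proof (induct p)
  case (pCons a p)
  have "map_poly f (pCons a p * q) = map_poly f (smult a q + pCons 0 (p * q))"
    by (simp add: mult_pCons_left)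
  also have "\<dots> = smult (f a) (map_poly f q) + pCons 0 (map_poly f p * map_poly f q)"
    using assms pCons by (simp add: map_poly_add_hom map_poly_smult map_poly_pCons is_ring_homD)
  also have "\<dots> = map_poly f (pCons a p) * map_poly f q"
    using assms by (simp add: map_poly_pCons is_ring_homD mult_pCons_left)
  finally show ?case .
qed simp

lemma is_ring_hom_poly_map_poly:
  assumes "is_ring_hom f"
  shows "is_ring_hom (\<lambda>p. poly (map_poly f p) x)"
  unfolding is_ring_hom_def
  using assms by (simp add: map_poly_add_hom map_poly_mult_hom is_ring_homD)

lemma is_ring_hom_constS: "is_ring_hom (constS :: 'k::field \<Rightarrow> 'k S)"
  unfolding constS_def
  by (intro is_ring_hom_comp[OF is_ring_hom_pCons_const] is_ring_hom_pCons_const)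

lemmas constS_hom_simps[simp] = is_ring_homD[OF is_ring_hom_constS]

lemma is_ring_hom_dvd_iff:
  assumes "is_ring_hom \<sigma>" "is_ring_hom \<tau>" "\<And>x. \<tau> (\<sigma> x) = x"
  shows "\<sigma> a dvd \<sigma> b \<longleftrightarrow> a dvd b"
  by (metis assms is_ring_hom_dvd)

lemma is_unit_constS: "c \<noteq> 0 \<Longrightarrow> is_unit (constS c)"
  by (metis constS_hom_simps(1,3) right_inverse dvdI)

lemma unit_mult_power_dvd_unit_mult_iff:
  fixes u a b :: "'a::algebraic_semidom"
  assumes "is_unit u"
  shows "(u * a) ^ n dvd u * b \<longleftrightarrow> a ^ n dvd b"
  using assms
  by (simp add: power_mult_distrib mult_unit_dvd_iff' dvd_mult_unit_iff' is_unit_power_iff)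

text \<open>The substitution \<open>x \<mapsto> l1, y \<mapsto> l2, z \<mapsto> l3\<close>, evaluating \<open>((K[x])[y])[z]\<close> from the inside out.\<close>

definition subst :: "'k::field S \<Rightarrow> 'k S \<Rightarrow> 'k S \<Rightarrow> 'k S \<Rightarrow> 'k S" where
  "subst l1 l2 l3 f =
     poly (map_poly (\<lambda>q. poly (map_poly (\<lambda>p. poly (map_poly constS p) l1) q) l2) f) l3"

lemma is_ring_hom_subst: "is_ring_hom (subst l1 l2 l3)"
  unfolding subst_def[abs_def]
  by (intro is_ring_hom_poly_map_poly is_ring_hom_constS)

lemma subst_constS [simp]: "subst l1 l2 l3 (constS a) = constS a"
  and subst_varX [simp]: "subst l1 l2 l3 varX = l1"
  and subst_varY [simp]: "subst l1 l2 l3 varY = l2"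
  and subst_varZ [simp]: "subst l1 l2 l3 varZ = l3"
  by (simp_all add: subst_def varX_def varY_def varZ_def map_poly_pCons)
     (simp add: constS_def map_poly_pCons)

lemma ring_hom_S_eqI:
  fixes g h :: "'k::field S \<Rightarrow> 'k S"
  assumes g: "is_ring_hom g" and h: "is_ring_hom h"
    and const: "\<And>a. g (constS a) = h (constS a)"
    and x: "g varX = h varX" and y: "g varY = h varY" and z: "g varZ = h varZ"
  shows "g f = h f"
proof -
  note homs = is_ring_homD[OF g] is_ring_homD[OF h]
  have in_x: "g [:[:p:]:] = h [:[:p:]:]" for p :: "'k poly"
  proof (induct p)
    case (pCons a p)
    have "[:[:pCons a p:]:] = constS a + varX * [:[:p:]:]"
      by (simp add: constS_def varX_def)
    then show ?case by (simp only: homs pCons const x)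
  qed (simp add: homs)
  have in_xy: "g [:q:] = h [:q:]" for q :: "'k poly poly"
  proof (induct q)
    case (pCons p q)
    have "[:pCons p q:] = [:[:p:]:] + varY * [:q:]"
      by (simp add: varY_def)
    then show ?case by (simp only: homs pCons in_x y)
  qed (simp add: homs)
  show ?thesis
  proof (induct f)
    case (pCons q f)
    have "pCons q f = [:q:] + varZ * f"
      by (simp add: varZ_def)
    then show ?case by (simp only: homs pCons in_xy z)
  qed (simp add: homs)
qed

section \<open>Linear algebra in \<open>K\<^sup>3\<close>\<close>

definition det3 :: "'k::field vec3 \<Rightarrow> 'k vec3 \<Rightarrow> 'k vec3 \<Rightarrow> 'k" where
  "det3 a b c = fst a * (fst (snd b) * snd (snd c) - snd (snd b) * fst (snd c))
     - fst (snd a) * (fst b * snd (snd c) - snd (snd b) * fst c)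
     + snd (snd a) * (fst b * fst (snd c) - fst (snd b) * fst c)"

definition lin3 :: "'k::field vec3 \<Rightarrow> 'k vec3 \<Rightarrow> 'k vec3 \<Rightarrow> 'k vec3 \<Rightarrow> 'k vec3" where
  "lin3 b1 b2 b3 h = scale3 (fst h) b1 + scale3 (fst (snd h)) b2 + scale3 (snd (snd h)) b3"

lemma scale3_Pair [simp]: "scale3 c (a, b, d) = (c * a, c * b, c * d)"
  by (simp add: scale3_def)

lemma lin3_Pair:
  "lin3 (b11, b12, b13) (b21, b22, b23) (b31, b32, b33) (h1, h2, h3) =
    (h1 * b11 + h2 * b21 + h3 * b31, h1 * b12 + h2 * b22 + h3 * b32, h1 * b13 + h2 * b23 + h3 * b33)"
  by (simp add: lin3_def)

lemma lin3_basis [simp]: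
  "lin3 b1 b2 b3 (1, 0, 0) = b1" "lin3 b1 b2 b3 (0, 1, 0) = b2" "lin3 b1 b2 b3 (0, 0, 1) = b3"
  by (cases b1; cases b2; cases b3; simp add: lin3_def)+

lemma lin3_inverse_exists:
  fixes b1 b2 b3 :: "'k::field vec3"
  assumes "det3 b1 b2 b3 \<noteq> 0"
  obtains d1 d2 d3 where "\<And>h. lin3 d1 d2 d3 (lin3 b1 b2 b3 h) = h"
    and "\<And>h. lin3 b1 b2 b3 (lin3 d1 d2 d3 h) = h"
proof -
  obtain b11 b12 b13 b21 b22 b23 b31 b32 b33
    where b: "b1 = (b11, b12, b13)" "b2 = (b21, b22, b23)" "b3 = (b31, b32, b33)"
    by (cases b1; cases b2; cases b3) auto
  define \<Delta> where "\<Delta> = det3 b1 b2 b3"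
  have \<Delta>: "\<Delta> = b11 * (b22 * b33 - b23 * b32) - b12 * (b21 * b33 - b23 * b31)
      + b13 * (b21 * b32 - b22 * b31)" "\<Delta> \<noteq> 0"
    using assms by (simp_all add: \<Delta>_def b det3_def)
  \<comment> \<open>the rows of the adjugate matrix, divided by the determinant\<close>
  define d1 where
    "d1 = ((b22*b33 - b23*b32) / \<Delta>, - (b12*b33 - b13*b32) / \<Delta>, (b12*b23 - b13*b22) / \<Delta>)"
  define d2 where
    "d2 = (- (b21*b33 - b23*b31) / \<Delta>, (b11*b33 - b13*b31) / \<Delta>, - (b11*b23 - b13*b21) / \<Delta>)"
  define d3 where
    "d3 = ((b21*b32 - b22*b31) / \<Delta>, - (b11*b32 - b12*b31) / \<Delta>, (b11*b22 - b12*b21) / \<Delta>)"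
  show thesis
  proof
    fix h :: "'k vec3"
    obtain h1 h2 h3 where h: "h = (h1, h2, h3)"
      by (cases h) auto
    show "lin3 d1 d2 d3 (lin3 b1 b2 b3 h) = h" "lin3 b1 b2 b3 (lin3 d1 d2 d3 h) = h"
      unfolding h b d1_def d2_def d3_def lin3_Pair using \<Delta>(2)
      by (simp add: divide_simps, simp add: \<Delta>(1), algebra)+
  qed
qed

section \<open>Linear changes of coordinates of \<open>S\<close> and \<open>Der(S)\<close>\<close>

lemma formS_scale3: "formS (scale3 c \<alpha>) = constS c * formS \<alpha>"
  by (cases \<alpha>) (simp add: formS_def algebra_simps)

lemma der_app_scale3: "der_app \<theta> (scale3 c \<alpha>) = constS c * der_app \<theta> \<alpha>"
  by (cases \<alpha>) (simp add: der_app_def algebra_simps)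

definition coord_subst :: "'k::field vec3 \<Rightarrow> 'k vec3 \<Rightarrow> 'k vec3 \<Rightarrow> 'k S \<Rightarrow> 'k S" where
  "coord_subst b1 b2 b3 = subst (formS b1) (formS b2) (formS b3)"

lemma is_ring_hom_coord_subst: "is_ring_hom (coord_subst b1 b2 b3)"
  unfolding coord_subst_def by (rule is_ring_hom_subst)

lemma coord_subst_constS [simp]: "coord_subst b1 b2 b3 (constS a) = constS a"
  by (simp add: coord_subst_def)

lemma coord_subst_formS: "coord_subst b1 b2 b3 (formS h) = formS (lin3 b1 b2 b3 h)"
  by (cases h; cases b1; cases b2; cases b3)
     (simp add: formS_def[of "(_, _, _)"] is_ring_homD[OF is_ring_hom_coord_subst] lin3_Pair,
      simp add: coord_subst_def formS_def algebra_simps)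

lemma coord_subst_inverse:
  assumes inv: "\<And>h. lin3 b1 b2 b3 (lin3 d1 d2 d3 h) = h"
  shows "coord_subst b1 b2 b3 (coord_subst d1 d2 d3 f) = f"
proof (rule ring_hom_S_eqI[OF is_ring_hom_comp[OF is_ring_hom_coord_subst is_ring_hom_coord_subst]
      is_ring_hom_id])
  have "formS (1, 0, 0) = varX" "formS (0, 1, 0) = varY" "formS (0, 0, 1) = varZ"
    by (simp_all add: formS_def)
  then show "coord_subst b1 b2 b3 (coord_subst d1 d2 d3 varX) = varX"
    "coord_subst b1 b2 b3 (coord_subst d1 d2 d3 varY) = varY"
    "coord_subst b1 b2 b3 (coord_subst d1 d2 d3 varZ) = varZ"
    using inv[of "(1, 0, 0)"] inv[of "(0, 1, 0)"] inv[of "(0, 0, 1)"]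
    by (simp_all add: coord_subst_def[of d1 d2 d3] coord_subst_formS)
qed simp

definition map_der :: "('k::field S \<Rightarrow> 'k S) \<Rightarrow> 'k der \<Rightarrow> 'k der" where
  "map_der \<sigma> \<theta> = (\<sigma> (fst \<theta>), \<sigma> (fst (snd \<theta>)), \<sigma> (snd (snd \<theta>)))"

definition der_lin3 :: "'k::field vec3 \<Rightarrow> 'k vec3 \<Rightarrow> 'k vec3 \<Rightarrow> 'k der \<Rightarrow> 'k der" where
  "der_lin3 r1 r2 r3 \<theta> = (der_app \<theta> r1, der_app \<theta> r2, der_app \<theta> r3)"

lemma der_app_map_der:
  assumes "is_ring_hom \<sigma>" "\<And>a. \<sigma> (constS a) = constS a"
  shows "der_app (map_der \<sigma> \<theta>) h = \<sigma> (der_app \<theta> h)"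
  by (simp add: map_der_def der_app_def is_ring_homD assms)

lemma der_app_der_lin3: "der_app (der_lin3 r1 r2 r3 \<theta>) h = der_app \<theta> (lin3 r1 r2 r3 h)"
  by (cases \<theta>; cases h; cases r1; cases r2; cases r3)
     (simp add: der_lin3_def der_app_def lin3_Pair algebra_simps)

lemma map_der_add: "is_ring_hom \<sigma> \<Longrightarrow> map_der \<sigma> (x + y) = map_der \<sigma> x + map_der \<sigma> y"
  by (simp add: map_der_def is_ring_homD)

lemma map_der_scaleS: "is_ring_hom \<sigma> \<Longrightarrow> map_der \<sigma> (scaleS s x) = scaleS (\<sigma> s) (map_der \<sigma> x)"
  by (simp add: map_der_def scaleS_def is_ring_homD)

lemma der_lin3_add: "der_lin3 r1 r2 r3 (x + y) = der_lin3 r1 r2 r3 x + der_lin3 r1 r2 r3 y"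
  by (cases x; cases y) (simp add: der_lin3_def der_app_def algebra_simps)

lemma der_lin3_scaleS: "der_lin3 r1 r2 r3 (scaleS s x) = scaleS s (der_lin3 r1 r2 r3 x)"
  by (cases x) (simp add: der_lin3_def der_app_def scaleS_def algebra_simps)

lemma der_lin3_der_lin3:
  assumes "\<And>h. lin3 r1 r2 r3 (lin3 q1 q2 q3 h) = h"
  shows "der_lin3 q1 q2 q3 (der_lin3 r1 r2 r3 \<theta>) = \<theta>"
  using assms[of "(1, 0, 0)"] assms[of "(0, 1, 0)"] assms[of "(0, 0, 1)"]
  by (cases \<theta>) (simp add: der_lin3_def[of q1 q2 q3] der_app_der_lin3, simp add: der_app_def)

lemma map_der_map_der: "(\<And>f. \<sigma> (\<tau> f) = f) \<Longrightarrow> map_der \<sigma> (map_der \<tau> \<theta>) = \<theta>"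
  by (simp add: map_der_def)

lemma map_der_der_lin3:
  assumes "is_ring_hom \<sigma>" "\<And>a. \<sigma> (constS a) = constS a"
  shows "map_der \<sigma> (der_lin3 r1 r2 r3 \<theta>) = der_lin3 r1 r2 r3 (map_der \<sigma> \<theta>)"
  by (simp add: der_lin3_def der_app_map_der[OF assms]) (simp add: map_der_def)

section \<open>Bases under semilinear bijections\<close>

interpretation M: module "scaleS :: 'k::field S \<Rightarrow> 'k der \<Rightarrow> 'k der"
  by unfold_locales (auto simp: scaleS_def algebra_simps)

lemma scaleS_Pair [simp]: "scaleS s (a, b, c) = (s * a, s * b, s * c)"
  by (simp add: scaleS_def)

definition has_basis :: "'k::field der set \<Rightarrow> bool" where
  "has_basis D \<longleftrightarrow> (\<exists>B \<subseteq> D. M.independent B \<and> M.span B = D)"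

lemma free_multiarr_iff_has_basis: "free_multiarr A m \<longleftrightarrow> has_basis (Dmod A m)"
  by (simp add: free_multiarr_def has_basis_def)

lemma span_image_semilinear:
  fixes \<Theta> :: "'k::field der \<Rightarrow> 'k der"
  assumes add: "\<And>x y. \<Theta> (x + y) = \<Theta> x + \<Theta> y"
    and scale: "\<And>s x. \<Theta> (scaleS s x) = scaleS (\<sigma> s) (\<Theta> x)"
  shows "\<Theta> ` M.span B \<subseteq> M.span (\<Theta> ` B)"
proof (rule image_subsetI)
  fix x assume "x \<in> M.span B"
  then show "\<Theta> x \<in> M.span (\<Theta> ` B)"
  proof (induct rule: M.span_induct_alt)
    case base
    have "\<Theta> 0 = 0" using add[of 0 0] by simp
    then show ?case by (simp add: M.span_zero)
  next
    case (step c x y)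
    then show ?case by (simp add: add scale M.span_add M.span_scale M.span_base)
  qed
qed

lemma independent_image_semilinear:
  fixes \<Theta> \<Theta>' :: "'k::field der \<Rightarrow> 'k der"
  assumes add: "\<And>x y. \<Theta>' (x + y) = \<Theta>' x + \<Theta>' y"
    and scale: "\<And>s x. \<Theta>' (scaleS s x) = scaleS (\<tau> s) (\<Theta>' x)"
    and inverse: "\<And>x. \<Theta>' (\<Theta> x) = x" "\<And>x. \<Theta> (\<Theta>' x) = x"
    and "M.independent B"
  shows "M.independent (\<Theta> ` B)"
  unfolding M.independent_explicit_module
proof clarify
  have zero: "\<Theta>' 0 = 0"
    using add[of 0 0] by simp
  fix t u w
  assume "finite t" "t \<subseteq> \<Theta> ` B" "w \<in> t" and dep: "(\<Sum>v\<in>t. scaleS (u v) v) = 0"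
  \<comment> \<open>pull the relation back along \<open>\<Theta>'\<close>\<close>
  have "(\<Sum>v\<in>\<Theta>' ` t. scaleS (\<tau> (u (\<Theta> v))) v) = (\<Sum>v\<in>t. \<Theta>' (scaleS (u v) v))"
    using inj_on_inverseI[of t \<Theta> \<Theta>', OF inverse(2)]
    by (simp only: sum.reindex o_def inverse(2) scale)
  also have "\<dots> = \<Theta>' (\<Sum>v\<in>t. scaleS (u v) v)"
    using sum_comp_morphism[of \<Theta>', OF zero add] by (simp add: o_def)
  finally have relation: "(\<Sum>v\<in>\<Theta>' ` t. scaleS (\<tau> (u (\<Theta> v))) v) = 0"
    by (simp only: dep zero)
  have "\<Theta>' ` t \<subseteq> B"
    using \<open>t \<subseteq> \<Theta> ` B\<close> by (auto simp: inverse)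
  from M.independentD[OF \<open>M.independent B\<close> finite_imageI[OF \<open>finite t\<close>] this relation]
  have "\<tau> (u (\<Theta> (\<Theta>' w))) = 0"
    using \<open>w \<in> t\<close> by blast
  then have "\<Theta>' (u w, 0, 0) = \<Theta>' 0"
    using scale[of "u w" "(1, 0, 0)"] zero by (simp add: inverse(2) zero_prod_def)
  then have "(u w, 0, 0) = (0 :: 'k der)"
    by (metis inverse(2))
  then show "u w = 0"
    by (simp add: zero_prod_def)
qed

lemma has_basis_image_semilinear:
  fixes \<Theta> \<Theta>' :: "'k::field der \<Rightarrow> 'k der"
  assumes add: "\<And>x y. \<Theta> (x + y) = \<Theta> x + \<Theta> y" "\<And>x y. \<Theta>' (x + y) = \<Theta>' x + \<Theta>' y"
    and scale: "\<And>s x. \<Theta> (scaleS s x) = scaleS (\<sigma> s) (\<Theta> x)"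
      "\<And>s x. \<Theta>' (scaleS s x) = scaleS (\<tau> s) (\<Theta>' x)"
    and inverse: "\<And>x. \<Theta>' (\<Theta> x) = x" "\<And>x. \<Theta> (\<Theta>' x) = x"
    and "has_basis D"
  shows "has_basis (\<Theta> ` D)"
proof -
  obtain B where B: "B \<subseteq> D" "M.independent B" "M.span B = D"
    using \<open>has_basis D\<close> unfolding has_basis_def by blast
  have "M.span (\<Theta> ` B) = \<Theta> ` D"
  proof
    show "\<Theta> ` D \<subseteq> M.span (\<Theta> ` B)"
      using span_image_semilinear[OF add(1) scale(1), of B] by (simp only: B(3))
    have "\<Theta>' ` M.span (\<Theta> ` B) \<subseteq> D"
      using span_image_semilinear[OF add(2) scale(2), of "\<Theta> ` B"]
      by (simp add: B(3) image_image inverse)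
    from image_mono[OF this, of \<Theta>] show "M.span (\<Theta> ` B) \<subseteq> \<Theta> ` D"
      by (simp add: image_image inverse)
  qed
  moreover have "M.independent (\<Theta> ` B)"
    using independent_image_semilinear[OF add(2) scale(2) inverse B(2)] .
  moreover have "\<Theta> ` B \<subseteq> \<Theta> ` D"
    using B(1) by (rule image_mono)
  ultimately show ?thesis
    unfolding has_basis_def by blast
qed

lemma has_basis_image_semilinear_iff:
  fixes \<Theta> \<Theta>' :: "'k::field der \<Rightarrow> 'k der"
  assumes add: "\<And>x y. \<Theta> (x + y) = \<Theta> x + \<Theta> y" "\<And>x y. \<Theta>' (x + y) = \<Theta>' x + \<Theta>' y"
    and scale: "\<And>s x. \<Theta> (scaleS s x) = scaleS (\<sigma> s) (\<Theta> x)"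
      "\<And>s x. \<Theta>' (scaleS s x) = scaleS (\<tau> s) (\<Theta>' x)"
    and inverse: "\<And>x. \<Theta>' (\<Theta> x) = x" "\<And>x. \<Theta> (\<Theta>' x) = x"
  shows "has_basis (\<Theta> ` D) \<longleftrightarrow> has_basis D"
proof
  assume "has_basis (\<Theta> ` D)"
  from has_basis_image_semilinear[OF add(2,1) scale(2,1) inverse(2,1) this]
  show "has_basis D"
    by (simp add: image_image inverse)
qed (rule has_basis_image_semilinear[OF add scale inverse])

section \<open>Freeness is invariant under linear equivalence\<close>

lemma formS_power_dvd_coord_change_iff:
  fixes b1 b2 b3 d1 d2 d3 :: "'k::field vec3"
  assumes db: "\<And>h. lin3 d1 d2 d3 (lin3 b1 b2 b3 h) = h" and "c \<noteq> 0"
  defines "\<sigma> \<equiv> coord_subst b1 b2 b3"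
  shows "formS (scale3 c (lin3 b1 b2 b3 \<alpha>)) ^ n
           dvd der_app (der_lin3 d1 d2 d3 (map_der \<sigma> \<theta>)) (scale3 c (lin3 b1 b2 b3 \<alpha>))
         \<longleftrightarrow> formS \<alpha> ^ n dvd der_app \<theta> \<alpha>"
proof -
  have hom: "is_ring_hom \<sigma>" "is_ring_hom (coord_subst d1 d2 d3)"
    by (simp_all add: \<sigma>_def is_ring_hom_coord_subst)
  have "formS (scale3 c (lin3 b1 b2 b3 \<alpha>)) = constS c * \<sigma> (formS \<alpha>)"
    by (simp add: formS_scale3 \<sigma>_def coord_subst_formS)
  moreover have "der_app (der_lin3 d1 d2 d3 (map_der \<sigma> \<theta>)) (scale3 c (lin3 b1 b2 b3 \<alpha>))
      = constS c * \<sigma> (der_app \<theta> \<alpha>)"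
    by (simp add: der_app_scale3 der_app_der_lin3 db \<sigma>_def
        der_app_map_der[OF is_ring_hom_coord_subst coord_subst_constS])
  moreover have "\<sigma> (formS \<alpha>) ^ n dvd \<sigma> (der_app \<theta> \<alpha>) \<longleftrightarrow> formS \<alpha> ^ n dvd der_app \<theta> \<alpha>"
    unfolding is_ring_homD(7)[OF hom(1), symmetric]
    by (rule is_ring_hom_dvd_iff[OF hom]) (simp add: \<sigma>_def coord_subst_inverse[OF db])
  ultimately show ?thesis
    by (simp add: unit_mult_power_dvd_unit_mult_iff is_unit_constS \<open>c \<noteq> 0\<close>)
qed

lemma free_multiarr_linear_equiv:
  fixes c :: "'k::field vec3 \<Rightarrow> 'k"
  assumes det: "det3 b1 b2 b3 \<noteq> 0"
    and c: "\<And>\<alpha>. \<alpha> \<in> A \<Longrightarrow> c \<alpha> \<noteq> 0"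
    and \<phi>: "\<And>\<alpha>. \<alpha> \<in> A \<Longrightarrow> \<phi> \<alpha> = scale3 (c \<alpha>) (lin3 b1 b2 b3 \<alpha>)"
    and A': "A' = \<phi> ` A"
    and m': "\<And>\<alpha>. \<alpha> \<in> A \<Longrightarrow> m' (\<phi> \<alpha>) = m \<alpha>"
  shows "free_multiarr A' m' \<longleftrightarrow> free_multiarr A m"
proof -
  obtain d1 d2 d3 where db: "\<And>h. lin3 d1 d2 d3 (lin3 b1 b2 b3 h) = h"
    and bd: "\<And>h. lin3 b1 b2 b3 (lin3 d1 d2 d3 h) = h"
    using lin3_inverse_exists[OF det] by blast
  define \<sigma> where "\<sigma> = coord_subst b1 b2 b3"
  define \<tau> where "\<tau> = coord_subst d1 d2 d3"
  have hom: "is_ring_hom \<sigma>" "is_ring_hom \<tau>"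
    by (simp_all add: \<sigma>_def \<tau>_def is_ring_hom_coord_subst)
  define \<Theta> where "\<Theta> \<theta> = der_lin3 d1 d2 d3 (map_der \<sigma> \<theta>)" for \<theta>
  define \<Theta>' where "\<Theta>' \<theta> = map_der \<tau> (der_lin3 b1 b2 b3 \<theta>)" for \<theta>
  have inverse: "\<Theta>' (\<Theta> \<theta>) = \<theta>" "\<Theta> (\<Theta>' \<theta>) = \<theta>" for \<theta>
    by (simp_all add: \<Theta>_def \<Theta>'_def der_lin3_der_lin3 db bd map_der_der_lin3 hom
        map_der_map_der \<sigma>_def \<tau>_def coord_subst_inverse)
  have semilinear:
    "\<Theta> (x + y) = \<Theta> x + \<Theta> y" "\<Theta>' (x + y) = \<Theta>' x + \<Theta>' y"
    "\<Theta> (scaleS s x) = scaleS (\<sigma> s) (\<Theta> x)" "\<Theta>' (scaleS s x) = scaleS (\<tau> s) (\<Theta>' x)" for x y s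
    by (simp_all add: \<Theta>_def \<Theta>'_def der_lin3_add der_lin3_scaleS map_der_add map_der_scaleS hom)
  have "formS (\<phi> \<alpha>) ^ m' (\<phi> \<alpha>) dvd der_app (\<Theta> \<theta>) (\<phi> \<alpha>) \<longleftrightarrow> formS \<alpha> ^ m \<alpha> dvd der_app \<theta> \<alpha>"
    if "\<alpha> \<in> A" for \<alpha> \<theta>
    unfolding m'[OF that] unfolding \<phi>[OF that] \<Theta>_def \<sigma>_def
    by (rule formS_power_dvd_coord_change_iff[OF db c[OF that]])
  then have "\<Theta> \<theta> \<in> Dmod A' m' \<longleftrightarrow> \<theta> \<in> Dmod A m" for \<theta>
    by (simp add: Dmod_def A')
  then have "Dmod A m = \<Theta> -` Dmod A' m'"
    by (simp add: set_eq_iff)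
  moreover have "surj \<Theta>"
    by (metis inverse(2) surjI)
  ultimately have "Dmod A' m' = \<Theta> ` Dmod A m"
    by simp
  then show ?thesis
    unfolding free_multiarr_iff_has_basis
    using has_basis_image_semilinear_iff[OF semilinear inverse] by simp
qed

section \<open>Hyperplanes and codimension\<close>

interpretation V3: vector_space "scale3 :: 'k::field \<Rightarrow> 'k vec3 \<Rightarrow> 'k vec3"
  by unfold_locales (auto simp: scale3_def algebra_simps)

lemma span_standard_basis3: "V3.span {(1, 0, 0), (0, 1, 0), (0, 0, 1 :: 'k::field)} = UNIV"
proof -
  have "(a, b, c) \<in> V3.span {(1, 0, 0), (0, 1, 0), (0, 0, 1 :: 'k)}" for a b c
  proof -
    have "(a, b, c) = scale3 a (1, 0, 0) + (scale3 b (0, 1, 0) + scale3 c (0, 0, 1))"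
      by simp
    also have "\<dots> \<in> V3.span {(1, 0, 0), (0, 1, 0), (0, 0, 1 :: 'k)}"
      by (intro V3.span_add V3.span_scale V3.span_base) auto
    finally show ?thesis .
  qed
  then show ?thesis by auto
qed

lemma codim3_eq_3_iff: "codim3 W = 3 \<longleftrightarrow> W \<subseteq> {0 :: 'k::field vec3}"
proof -
  have "V3.dim W = 0 \<longleftrightarrow> W \<subseteq> {0 :: 'k vec3}"
  proof
    obtain B where B: "B \<subseteq> W" "V3.independent B" "W \<subseteq> V3.span B" "card B = V3.dim W"
      using V3.basis_exists by blast
    have "finite B"
      using V3.independent_span_bound[OF _ B(2), of "{(1, 0, 0), (0, 1, 0), (0, 0, 1)}"]
      by (simp add: span_standard_basis3)
    moreover assume "V3.dim W = 0"
    ultimately show "W \<subseteq> {0}"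
      using B by simp
  next
    assume "W \<subseteq> {0}"
    then show "V3.dim W = 0"
      using V3.dim_le_card[of W "{}"] by simp
  qed
  moreover have "3 - V3.dim W = 3 \<longleftrightarrow> V3.dim W = 0"
    by linarith
  ultimately show ?thesis
    by (simp add: codim3_def)
qed

definition cross3 :: "'k::field vec3 \<Rightarrow> 'k vec3 \<Rightarrow> 'k vec3" where
  "cross3 a b = (fst (snd a) * snd (snd b) - snd (snd a) * fst (snd b),
                 snd (snd a) * fst b - fst a * snd (snd b),
                 fst a * fst (snd b) - fst (snd a) * fst b)"

lemma cross3_self_scale3 [simp]: "cross3 (scale3 c a) a = 0"
  by (cases a) (simp add: cross3_def zero_prod_def algebra_simps)

lemma cross3_eq_0_imp_parallel:
  fixes a b :: "'k::field vec3"
  assumes "a \<noteq> 0" "cross3 a b = 0"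
  obtains c where "b = scale3 c a"
proof -
  obtain a1 a2 a3 b1 b2 b3 where ab: "a = (a1, a2, a3)" "b = (b1, b2, b3)"
    by (cases a; cases b) auto
  have cross: "a2 * b3 = a3 * b2" "a3 * b1 = a1 * b3" "a1 * b2 = a2 * b1"
    using assms(2) by (simp_all add: ab cross3_def zero_prod_def)
  consider "a1 \<noteq> 0" | "a2 \<noteq> 0" | "a3 \<noteq> 0"
    using assms(1) by (auto simp: ab zero_prod_def)
  then show thesis
  proof cases
    case 1
    then show thesis using cross by (intro that[of "b1 / a1"]) (simp add: ab field_simps)
  next
    case 2
    then show thesis using cross by (intro that[of "b2 / a2"]) (simp add: ab field_simps)
  next
    case 3
    then show thesis using cross by (intro that[of "b3 / a3"]) (simp add: ab field_simps)
  qed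
qed

lemma hyp_scale3:
  assumes "c \<noteq> 0"
  shows "hyp (scale3 c a) = hyp a"
proof -
  obtain a1 a2 a3 where a: "a = (a1, a2, a3)"
    by (cases a) auto
  have "c * a1 * v1 + c * a2 * v2 + c * a3 * v3 = c * (a1 * v1 + a2 * v2 + a3 * v3)" for v1 v2 v3
    by (simp add: algebra_simps)
  then show ?thesis
    using assms by (auto simp: a hyp_def)
qed

lemma multiarr_cross3_neq_0:
  assumes "multiarr A m" "\<alpha> \<in> A" "\<beta> \<in> A" "\<alpha> \<noteq> \<beta>"
  shows "cross3 \<alpha> \<beta> \<noteq> 0"
proof
  assume "cross3 \<alpha> \<beta> = 0"
  moreover have "\<alpha> \<noteq> 0" "\<beta> \<noteq> 0"
    using assms by (auto simp: multiarr_def)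
  ultimately obtain c where c: "\<beta> = scale3 c \<alpha>"
    using cross3_eq_0_imp_parallel by blast
  then have "c \<noteq> 0"
    using \<open>\<beta> \<noteq> 0\<close> by (cases \<alpha>) (auto simp: zero_prod_def)
  then have "hyp \<beta> = hyp \<alpha>"
    by (simp add: c hyp_scale3)
  then show False
    using assms by (auto simp: multiarr_def)
qed

lemma hyp_Int3_subset_zero:
  fixes a b c :: "'k::field vec3"
  assumes "det3 a b c \<noteq> 0"
  shows "hyp a \<inter> (hyp b \<inter> hyp c) \<subseteq> {0}"
proof clarify
  fix v1 v2 v3 assume v: "(v1, v2, v3) \<in> hyp a" "(v1, v2, v3) \<in> hyp b" "(v1, v2, v3) \<in> hyp c"
  obtain a1 a2 a3 b1 b2 b3 c1 c2 c3
    where abc: "a = (a1, a2, a3)" "b = (b1, b2, b3)" "c = (c1, c2, c3)"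
    by (cases a; cases b; cases c) auto
  let ?X = "a1 * v1 + a2 * v2 + a3 * v3" and ?Y = "b1 * v1 + b2 * v2 + b3 * v3"
    and ?Z = "c1 * v1 + c2 * v2 + c3 * v3"
  have XYZ: "?X = 0" "?Y = 0" "?Z = 0"
    using v by (simp_all add: abc hyp_def)
  \<comment> \<open>Cramer's rule: \<open>det3 a b c \<cdot> v\<close> is a combination of \<open>?X, ?Y, ?Z\<close>\<close>
  have cramer:
    "det3 a b c * v1 = ?X * (b2 * c3 - b3 * c2) + ?Y * (c2 * a3 - c3 * a2) + ?Z * (a2 * b3 - a3 * b2)"
    "det3 a b c * v2 = ?X * (b3 * c1 - b1 * c3) + ?Y * (c3 * a1 - c1 * a3) + ?Z * (a3 * b1 - a1 * b3)"
    "det3 a b c * v3 = ?X * (b1 * c2 - b2 * c1) + ?Y * (c1 * a2 - c2 * a1) + ?Z * (a1 * b2 - a2 * b1)"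
    by (simp_all add: abc det3_def) algebra+
  then have "det3 a b c * v1 = 0" "det3 a b c * v2 = 0" "det3 a b c * v3 = 0"
    unfolding XYZ by simp_all
  then show "(v1, v2, v3) = 0"
    using assms by (simp add: zero_prod_def)
qed

lemma cross3_in_hyp_Int3:
  fixes a b c :: "'k::field vec3"
  assumes "det3 a b c = 0"
  shows "cross3 a b \<in> hyp a \<inter> (hyp b \<inter> hyp c)"
proof -
  obtain a1 a2 a3 b1 b2 b3 c1 c2 c3
    where abc: "a = (a1, a2, a3)" "b = (b1, b2, b3)" "c = (c1, c2, c3)"
    by (cases a; cases b; cases c) auto
  have "c1 * (a2 * b3 - a3 * b2) + c2 * (a3 * b1 - a1 * b3) + c3 * (a1 * b2 - a2 * b1) = det3 a b c"
    by (simp add: abc det3_def) algebra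
  moreover have "a1 * (a2 * b3 - a3 * b2) + a2 * (a3 * b1 - a1 * b3) + a3 * (a1 * b2 - a2 * b1) = 0"
    "b1 * (a2 * b3 - a3 * b2) + b2 * (a3 * b1 - a1 * b3) + b3 * (a1 * b2 - a2 * b1) = 0"
    by algebra+
  ultimately show ?thesis
    using assms by (simp add: abc cross3_def hyp_def)
qed

lemma codim3_hyp_Int3_eq_3_iff:
  fixes a b c :: "'k::field vec3"
  assumes "cross3 a b \<noteq> 0"
  shows "codim3 (hyp a \<inter> (hyp b \<inter> hyp c)) = 3 \<longleftrightarrow> det3 a b c \<noteq> 0"
  using hyp_Int3_subset_zero[of a b c] cross3_in_hyp_Int3[of a b c] assms
  by (auto simp: codim3_eq_3_iff)

section \<open>Rigidity of the \<open>A\<^sub>3\<close> configuration\<close>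

lemma det3_expansion:
  "scale3 (det3 a1 a2 a3) w
     = scale3 (det3 w a2 a3) a1 + scale3 (det3 a1 w a3) a2 + scale3 (det3 a1 a2 w) a3"
proof -
  obtain x1 y1 z1 x2 y2 z2 x3 y3 z3 u v t
    where a: "a1 = (x1, y1, z1)" "a2 = (x2, y2, z2)" "a3 = (x3, y3, z3)" "w = (u, v, t)"
    by (cases a1; cases a2; cases a3; cases w) auto
  show ?thesis
    unfolding a by (simp add: det3_def, intro conjI; algebra)
qed

lemma det3_eq_0_imp_in_plane:
  fixes a1 a2 a3 w :: "'k::field vec3"
  assumes "det3 a1 a2 a3 \<noteq> 0" "det3 a1 a2 w = 0"
  obtains p q where "w = scale3 p a1 + scale3 q a2"
proof
  let ?D = "det3 a1 a2 a3"
  have "scale3 ?D w = scale3 (det3 w a2 a3) a1 + scale3 (det3 a1 w a3) a2"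
    using det3_expansion[of a1 a2 a3 w] assms(2) by simp
  then have "scale3 (inverse ?D) (scale3 ?D w)
      = scale3 (inverse ?D) (scale3 (det3 w a2 a3) a1 + scale3 (det3 a1 w a3) a2)"
    by (rule arg_cong)
  then show "w = scale3 (det3 w a2 a3 / ?D) a1 + scale3 (det3 a1 w a3 / ?D) a2"
    using assms(1) by (simp add: V3.scale_right_distrib V3.scale_scale divide_inverse_commute)
qed

lemma det3_cyclic: "det3 b c a = det3 a b c"
  by (simp add: det3_def algebra_simps)

lemma det3_swap23: "det3 a c b = - det3 a b c"
  by (simp add: det3_def algebra_simps)

lemma det3_scale3: "det3 (scale3 x a) (scale3 y b) (scale3 z c) = x * y * z * det3 a b c"
  by (cases a; cases b; cases c) (simp add: det3_def algebra_simps)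

lemma det3_pairwise_combinations:
  "det3 (scale3 p1 a1 + scale3 p2 a2) (scale3 s2 a2 + scale3 s3 a3) (scale3 r1 a1 + scale3 r3 a3)
     = (p1 * s2 * r3 + p2 * s3 * r1) * det3 a1 a2 a3"
proof -
  obtain x1 y1 z1 x2 y2 z2 x3 y3 z3
    where a: "a1 = (x1, y1, z1)" "a2 = (x2, y2, z2)" "a3 = (x3, y3, z3)"
    by (cases a1; cases a2; cases a3) auto
  show ?thesis
    unfolding a by (simp add: det3_def, algebra)
qed

lemma A3_configuration_normal_form:
  fixes a1 a2 a3 a4 a5 a6 :: "'k::field vec3"
  assumes D: "det3 a1 a2 a3 \<noteq> 0"
    and dep: "det3 a1 a2 a4 = 0" "det3 a2 a3 a5 = 0" "det3 a1 a3 a6 = 0" "det3 a4 a5 a6 = 0"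
    and indep: "cross3 a4 a1 \<noteq> 0" "cross3 a4 a2 \<noteq> 0" "cross3 a5 a3 \<noteq> 0"
      "cross3 a6 a1 \<noteq> 0" "cross3 a6 a3 \<noteq> 0"
  obtains b1 b2 b3 c1 c2 c3 c4 c5 c6 where "det3 b1 b2 b3 \<noteq> 0"
    and "c1 \<noteq> 0" "c2 \<noteq> 0" "c3 \<noteq> 0" "c4 \<noteq> 0" "c5 \<noteq> 0" "c6 \<noteq> 0"
    and "a1 = scale3 c1 b1" "a2 = scale3 c2 b2" "a3 = scale3 c3 b3"
      "a4 = scale3 c4 (b1 - b2)" "a5 = scale3 c5 (b2 - b3)" "a6 = scale3 c6 (b1 - b3)"
proof -
  obtain p1 p2 where a4: "a4 = scale3 p1 a1 + scale3 p2 a2"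
    using det3_eq_0_imp_in_plane[OF D dep(1)] .
  obtain s2 s3 where a5: "a5 = scale3 s2 a2 + scale3 s3 a3"
    using det3_eq_0_imp_in_plane[of a2 a3 a1 a5] D dep(2) by (metis det3_cyclic)
  obtain r1 r3 where a6: "a6 = scale3 r1 a1 + scale3 r3 a3"
    using det3_eq_0_imp_in_plane[of a1 a3 a2 a6] D dep(3)
    by (metis det3_swap23 neg_equal_0_iff_equal)
  have nonzero: "p1 \<noteq> 0" "p2 \<noteq> 0" "s2 \<noteq> 0" "r1 \<noteq> 0" "r3 \<noteq> 0"
    using indep by (auto simp: a4 a5 a6)
  have rel: "p1 * s2 * r3 + p2 * s3 * r1 = 0"
    using dep(4) D by (simp add: a4 a5 a6 det3_pairwise_combinations)
  \<comment> \<open>\<open>b1, b2\<close> give \<open>a4 = b1 - b2\<close> and \<open>b3\<close> gives \<open>a6 \<sim> b1 - b3\<close>; then \<open>rel\<close> forces \<open>a5 \<sim> b2 - b3\<close>\<close>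
  define b1 where "b1 = scale3 p1 a1"
  define b2 where "b2 = scale3 (- p2) a2"
  define b3 where "b3 = scale3 (- (p1 * r3 / r1)) a3"
  show thesis
  proof (rule that[of b1 b2 b3 "1 / p1" "- 1 / p2" "- r1 / (p1 * r3)" 1 "- s2 / p2" "r1 / p1"])
    show "det3 b1 b2 b3 \<noteq> 0"
      unfolding b1_def b2_def b3_def det3_scale3 using D nonzero by simp
    have s3: "s3 = - (p1 * s2 * r3) / (p2 * r1)"
      using rel nonzero by (simp add: field_simps add_eq_0_iff2)
    obtain x1 y1 z1 x2 y2 z2 x3 y3 z3
      where a: "a1 = (x1, y1, z1)" "a2 = (x2, y2, z2)" "a3 = (x3, y3, z3)"
      by (cases a1; cases a2; cases a3) auto
    show "a1 = scale3 (1 / p1) b1" "a2 = scale3 (- 1 / p2) b2" "a3 = scale3 (- r1 / (p1 * r3)) b3"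
      "a4 = scale3 1 (b1 - b2)" "a5 = scale3 (- s2 / p2) (b2 - b3)" "a6 = scale3 (r1 / p1) (b1 - b3)"
      unfolding a4 a5 a6 s3 b1_def b2_def b3_def a using nonzero
      by (simp_all add: field_simps)
  qed (use nonzero in simp_all)
qed

lemma weylA3_cross3_neq_0:
  "H \<in> weylA3 \<Longrightarrow> K \<in> weylA3 \<Longrightarrow> H \<noteq> K \<Longrightarrow> cross3 H K \<noteq> (0 :: 'k::field vec3)"
  by (auto simp: weylA3_def cross3_def zero_prod_def)

lemma weylA3_lattice_linear_equiv:
  fixes \<phi> :: "'k::field vec3 \<Rightarrow> 'k vec3"
  assumes indep: "\<And>H K. H \<in> weylA3 \<Longrightarrow> K \<in> weylA3 \<Longrightarrow> H \<noteq> K \<Longrightarrow> cross3 (\<phi> H) (\<phi> K) \<noteq> 0"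
    and codim: "\<forall>B\<subseteq>weylA3. codim3 (\<Inter>H\<in>B. hyp H) = codim3 (\<Inter>H\<in>B. hyp (\<phi> H))"
  obtains b1 b2 b3 c where "det3 b1 b2 b3 \<noteq> 0"
    and "\<And>H. H \<in> weylA3 \<Longrightarrow> c H \<noteq> 0"
    and "\<And>H. H \<in> weylA3 \<Longrightarrow> \<phi> H = scale3 (c H) (lin3 b1 b2 b3 H)"
proof -
  have det_eq_0_iff: "det3 (\<phi> H) (\<phi> K) (\<phi> L) = 0 \<longleftrightarrow> det3 H K L = 0"
    if "H \<in> weylA3" "K \<in> weylA3" "L \<in> weylA3" "H \<noteq> K" for H K L
    using codim[rule_format, of "{H, K, L}"] that
      codim3_hyp_Int3_eq_3_iff[OF indep[OF that(1,2,4)], of "\<phi> L"]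
      codim3_hyp_Int3_eq_3_iff[OF weylA3_cross3_neq_0[OF that(1,2,4)], of L]
    by auto
  let ?x = "(1, 0, 0) :: 'k vec3" and ?y = "(0, 1, 0) :: 'k vec3" and ?z = "(0, 0, 1) :: 'k vec3"
  let ?xy = "(1, -1, 0) :: 'k vec3" and ?yz = "(0, 1, -1) :: 'k vec3"
    and ?xz = "(1, 0, -1) :: 'k vec3"
  have W: "?x \<in> weylA3" "?y \<in> weylA3" "?z \<in> weylA3" "?xy \<in> weylA3" "?yz \<in> weylA3" "?xz \<in> weylA3"
    by (simp_all add: weylA3_def)
  obtain b1 b2 b3 c1 c2 c3 c4 c5 c6 where b: "det3 b1 b2 b3 \<noteq> 0"
    and c: "c1 \<noteq> 0" "c2 \<noteq> 0" "c3 \<noteq> 0" "c4 \<noteq> 0" "c5 \<noteq> 0" "c6 \<noteq> 0"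
    and \<phi>: "\<phi> ?x = scale3 c1 b1" "\<phi> ?y = scale3 c2 b2" "\<phi> ?z = scale3 c3 b3"
      "\<phi> ?xy = scale3 c4 (b1 - b2)" "\<phi> ?yz = scale3 c5 (b2 - b3)" "\<phi> ?xz = scale3 c6 (b1 - b3)"
  proof (rule A3_configuration_normal_form)
    show "det3 (\<phi> ?x) (\<phi> ?y) (\<phi> ?z) \<noteq> 0" "det3 (\<phi> ?x) (\<phi> ?y) (\<phi> ?xy) = 0"
      "det3 (\<phi> ?y) (\<phi> ?z) (\<phi> ?yz) = 0" "det3 (\<phi> ?x) (\<phi> ?z) (\<phi> ?xz) = 0"
      "det3 (\<phi> ?xy) (\<phi> ?yz) (\<phi> ?xz) = 0"
      by (subst det_eq_0_iff; use W in \<open>simp add: det3_def\<close>)+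
    show "cross3 (\<phi> ?xy) (\<phi> ?x) \<noteq> 0" "cross3 (\<phi> ?xy) (\<phi> ?y) \<noteq> 0" "cross3 (\<phi> ?yz) (\<phi> ?z) \<noteq> 0"
      "cross3 (\<phi> ?xz) (\<phi> ?x) \<noteq> 0" "cross3 (\<phi> ?xz) (\<phi> ?z) \<noteq> 0"
      by (rule indep; use W in simp)+
  qed
  have "\<forall>H\<in>weylA3. \<exists>c. c \<noteq> 0 \<and> \<phi> H = scale3 c (lin3 b1 b2 b3 H)"
    using c \<phi> by (auto simp: weylA3_def lin3_def)
  then obtain c where "\<forall>H\<in>weylA3. c H \<noteq> 0 \<and> \<phi> H = scale3 (c H) (lin3 b1 b2 b3 H)"
    by (metis bchoice)
  with b show thesis
    using that by blast
qed

theorem corollary1p4: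
  fixes m :: "'k::field vec3 \<Rightarrow> nat"
    and A' :: "'k vec3 set" and m' :: "'k vec3 \<Rightarrow> nat"
    and \<phi> :: "'k vec3 \<Rightarrow> 'k vec3"
  assumes "multiarr weylA3 m"
    and "unbalanced weylA3 m"
    and "multiarr A' m'"
    and "bij_betw \<phi> weylA3 A'"
    and "\<forall>H\<in>weylA3. m' (\<phi> H) = m H"
    and "\<forall>B\<subseteq>weylA3. codim3 (\<Inter>H\<in>B. hyp H) = codim3 (\<Inter>H\<in>B. hyp (\<phi> H))"
  shows "free_multiarr weylA3 m \<longleftrightarrow> free_multiarr A' m'"
proof -
  have A': "A' = \<phi> ` weylA3"
    using assms(4) by (simp add: bij_betw_def)
  have "cross3 (\<phi> H) (\<phi> K) \<noteq> 0" if "H \<in> weylA3" "K \<in> weylA3" "H \<noteq> K" for H K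
  proof (rule multiarr_cross3_neq_0[OF assms(3)])
    show "\<phi> H \<in> A'" "\<phi> K \<in> A'" "\<phi> H \<noteq> \<phi> K"
      using that assms(4) by (auto simp: bij_betw_def inj_on_def)
  qed
  then obtain b1 b2 b3 c where "det3 b1 b2 b3 \<noteq> 0" "\<And>H. H \<in> weylA3 \<Longrightarrow> c H \<noteq> 0"
    "\<And>H. H \<in> weylA3 \<Longrightarrow> \<phi> H = scale3 (c H) (lin3 b1 b2 b3 H)"
    using weylA3_lattice_linear_equiv assms(6) by blast
  from free_multiarr_linear_equiv[OF this A'] show ?thesis
    using assms(5) by auto
qed

end
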